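(* Let $U,V\subseteq\mathbb{R}^n$ be bounded sets, each spanning $\mathbb{R}^n$, and let $\Delta=\sup_{u\in U,v\in V}|\langle u,v\rangle|$. Then there exists an invertible linear operator $L:\mathbb{R}^n\to\mathbb{R}^n$ such that $\|Lu\|_2\le n^{1/4}\sqrt{\Delta}$ for all $u\in U$ and $\|(L^{-1})^Tv\|_2\le n^{1/4}\sqrt{\Delta}$ for all $v\in V$. *)

theory Defs
  imports "HOL-Analysis.Analysis"
begin

end

theory Submission
  imports Defs
begin

(*
  Idea (a John-ellipsoid type argument).  Let S be the set of matrices L that map U into
  the closed unit ball.  Since U is bounded and spans, S is compact and contains a small
  multiple of the identity, so |det| attains a positive maximum on S at some L0.
  Maximality forces L0 U to be "fat in every direction": if the image L0 U were contained
  in a slab {x. |x \<bullet> w| \<le> t} with n t\<^sup>2 < 1, stretching along w and shrinking uniformly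
  would give an element of S of larger |det|.  For v \<in> V the vector z = L0\<^sup>-\<^sup>T v satisfies
  (L0 u) \<bullet> z = u \<bullet> v, so L0 U lies in a slab of half-width \<Delta> / \<parallel>z\<parallel> around z\<^sup>\<bottom>, whence
  \<parallel>z\<parallel> \<le> sqrt n \<Delta>.  Rescaling L0 by n^(1/4) sqrt \<Delta> balances both bounds.
*)

lemma matrix_inv_mult:
  fixes A :: "real^'n^'n"
  assumes "invertible A"
  shows "A ** matrix_inv A = mat 1" "matrix_inv A ** A = mat 1"
  using someI_ex[OF assms[unfolded invertible_def]] unfolding matrix_inv_def by auto

lemma matrix_inv_scaleR:
  fixes A :: "real^'n^'n"
  assumes A: "invertible A" and "c \<noteq> 0"
  shows "matrix_inv (c *\<^sub>R A) = (1 / c) *\<^sub>R matrix_inv A"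
proof -
  let ?M = "matrix_inv (c *\<^sub>R A)"
  have cA: "invertible (c *\<^sub>R A)" using scalar_invertible[OF _ A] assms(2) by simp
  have "?M = ?M ** ((c *\<^sub>R A) ** ((1 / c) *\<^sub>R matrix_inv A))"
    using matrix_inv_mult[OF A] assms(2) by (simp add: matrix_scalar_ac)
  also have "\<dots> = (?M ** (c *\<^sub>R A)) ** ((1 / c) *\<^sub>R matrix_inv A)"
    by (simp add: matrix_mul_assoc)
  also have "\<dots> = (1 / c) *\<^sub>R matrix_inv A" using matrix_inv_mult[OF cA] by simp
  finally show ?thesis .
qed

lemma norm_orthogonal_matrix:
  fixes Q :: "real^'n^'n"
  assumes "orthogonal_matrix Q"
  shows "norm (Q *v x) = norm x"
proof -
  have "(Q *v x) \<bullet> (Q *v x) = x \<bullet> x"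
    using assms unfolding orthogonal_matrix_def
    by (metis dot_lmul_matrix matrix_vector_mul_assoc matrix_vector_mul_lid transpose_matrix_vector)
  then show ?thesis by (metis norm_eq)
qed

lemma inner_left_inverse_transpose:
  fixes L M :: "real^'n^'n"
  assumes "M ** L = mat 1"
  shows "(L *v u) \<bullet> (transpose M *v v) = u \<bullet> v"
proof -
  have "(L *v u) \<bullet> (transpose M *v v) = (v v* M) \<bullet> (L *v u)"
    by (subst inner_commute) (simp only: transpose_matrix_vector)
  also have "\<dots> = v \<bullet> (M *v (L *v u))" by (rule dot_lmul_matrix)
  also have "\<dots> = v \<bullet> u"
    by (simp only: matrix_vector_mul_assoc assms matrix_vector_mul_lid)
  also have "\<dots> = u \<bullet> v" by (rule inner_commute)
  finally show ?thesis .
qed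

section \<open>Diagonal stretch matrices\<close>

definition stretch :: "'n \<Rightarrow> real \<Rightarrow> real \<Rightarrow> real^'n^'n" where
  "stretch k l a = (\<chi> i j. if i = j then (if i = k then l * a else l) else 0)"

lemma stretch_mult_vec:
  fixes y :: "real^'n"
  shows "stretch k l a *v y = l *\<^sub>R (y + ((a - 1) * y $ k) *\<^sub>R axis k 1)"
proof -
  have "(\<Sum>j\<in>UNIV. (if i = j then (if i = k then l * a else l) else 0) * y $ j)
        = (if i = k then l * a else l) * y $ i" for i
    by (simp add: if_distrib[of "\<lambda>z. z * _"] sum.delta cong: if_cong)
  then show ?thesis
    by (auto simp: stretch_def vec_eq_iff matrix_vector_mult_def axis_def algebra_simps)
qed

lemma det_stretch: "det (stretch k l a :: real^'n^'n) = l ^ CARD('n) * a"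
proof -
  have "det (stretch k l a :: real^'n^'n) = (\<Prod>i\<in>UNIV. l * (if i = k then a else 1))"
    unfolding stretch_def by (subst det_diagonal) (auto intro: prod.cong)
  also have "\<dots> = l ^ CARD('n) * a" by (simp add: prod.distrib)
  finally show ?thesis .
qed

lemma norm_add_scaled_unit_sq:
  fixes y e :: "'a::real_inner"
  assumes "norm e = 1"
  shows "(norm (y + s *\<^sub>R e))\<^sup>2 = (norm y)\<^sup>2 + 2 * s * (y \<bullet> e) + s\<^sup>2"
proof -
  have "e \<bullet> e = 1" using assms by (metis norm_eq_1)
  then show ?thesis
    unfolding power2_norm_eq_inner
    by (simp add: inner_add_left inner_add_right inner_commute power2_eq_square algebra_simps)
qed

text \<open>A stretch by \<open>sqrt (1 + d)\<close> along axis \<open>k\<close>, compensated by the uniform factor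
  \<open>1 / sqrt (1 + d t\<^sup>2)\<close>, keeps the unit ball's points with \<open>|y\<^sub>k| \<le> t\<close> inside the unit ball:
  the squared norm grows by exactly \<open>d y\<^sub>k\<^sup>2 \<le> d t\<^sup>2\<close> before compensation.\<close>

lemma norm_stretch_le_1:
  fixes y :: "real^'n"
  assumes y: "norm y \<le> 1" and yk: "\<bar>y $ k\<bar> \<le> t" and d: "0 \<le> d"
  shows "norm (stretch k (1 / sqrt (1 + d * t\<^sup>2)) (sqrt (1 + d)) *v y) \<le> 1"
proof -
  define a where "a = sqrt (1 + d)"
  have a2: "a\<^sup>2 = 1 + d" unfolding a_def using d by simp
  have "(norm (y + ((a - 1) * y $ k) *\<^sub>R axis k 1))\<^sup>2
        = (norm y)\<^sup>2 + 2 * ((a - 1) * y $ k) * (y \<bullet> axis k 1) + ((a - 1) * y $ k)\<^sup>2"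
    by (rule norm_add_scaled_unit_sq) simp
  also have "\<dots> = (norm y)\<^sup>2 + (a\<^sup>2 - 1) * (y $ k)\<^sup>2"
    by (simp add: cart_eq_inner_axis[symmetric] power2_eq_square algebra_simps)
  also have "\<dots> \<le> 1 + d * t\<^sup>2"
  proof (rule add_mono)
    show "(norm y)\<^sup>2 \<le> 1" using y by (simp add: power_le_one)
    have "(y $ k)\<^sup>2 \<le> t\<^sup>2" using yk by (metis abs_ge_zero power2_abs power_mono)
    then show "(a\<^sup>2 - 1) * (y $ k)\<^sup>2 \<le> d * t\<^sup>2" using a2 d by (simp add: mult_left_mono)
  qed
  finally have "norm (y + ((a - 1) * y $ k) *\<^sub>R axis k 1) \<le> sqrt (1 + d * t\<^sup>2)"
    by (simp add: real_le_rsqrt)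
  moreover have "0 < sqrt (1 + d * t\<^sup>2)" using d by (simp add: add_pos_nonneg)
  ultimately show ?thesis
    unfolding stretch_mult_vec a_def[symmetric] by (simp add: divide_le_eq)
qed

text \<open>A Bernoulli-type bound: \<open>(1 + x)\<^sup>n \<le> e\<^sup>n\<^sup>x\<close> and \<open>1 - n x \<le> e\<^sup>-\<^sup>n\<^sup>x\<close>.\<close>

lemma one_plus_pow_mult_le_1:
  fixes x :: real
  assumes "0 \<le> x" "real n * x < 1"
  shows "(1 + x) ^ n * (1 - real n * x) \<le> 1"
proof -
  have "(1 + x) ^ n \<le> exp x ^ n"
    using assms by (intro power_mono) (auto simp: exp_ge_add_one_self add.commute)
  also have "\<dots> = exp (real n * x)" by (simp add: exp_of_nat_mult)
  finally have up: "(1 + x) ^ n \<le> exp (real n * x)" .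
  have low: "1 - real n * x \<le> exp (- (real n * x))"
    using exp_ge_add_one_self[of "- (real n * x)"] by simp
  have "(1 + x) ^ n * (1 - real n * x) \<le> exp (real n * x) * exp (- (real n * x))"
    using assms up low by (intro mult_mono) auto
  also have "\<dots> = 1" by (simp add: exp_minus)
  finally show ?thesis .
qed

lemma stretch_gain:
  fixes t :: real
  assumes "real n * t\<^sup>2 < 1"
  obtains d where "0 < d" "(1 + d * t\<^sup>2) ^ n < 1 + d"
proof
  define p where "p = real n * t\<^sup>2"
  define d where "d = (1 - p) / 2"
  have p: "0 \<le> p" "p < 1" using assms unfolding p_def by auto
  show d0: "0 < d" unfolding d_def using p by simp
  have "p * d \<le> d" using mult_left_le_one_le[of d p] p d0 by simp
  moreover have "d < 1" unfolding d_def using p by simp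
  ultimately have pd: "p * d < 1" by linarith
  have "(1 + d * t\<^sup>2) ^ n * (1 - p * d) \<le> 1"
    using one_plus_pow_mult_le_1[of "d * t\<^sup>2" n] d0 pd unfolding p_def by (simp add: algebra_simps)
  also have "1 < (1 + d) * (1 - p * d)"
  proof -
    have "(1 + d) * (1 - p * d) = 1 + d * ((1 - p) * (2 - p) / 2)"
      unfolding d_def by (simp add: field_simps)
    then show ?thesis using d0 p by simp
  qed
  finally show "(1 + d * t\<^sup>2) ^ n < 1 + d"
    using pd by (simp add: mult_less_cancel_right)
qed

section \<open>Matrices mapping a set into the unit ball\<close>

definition unit_ball_maps :: "(real^'n) set \<Rightarrow> (real^'n^'n) set" where
  "unit_ball_maps U = {L. \<forall>u\<in>U. norm (L *v u) \<le> 1}"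

lemma closed_unit_ball_maps: "closed (unit_ball_maps U)"
proof -
  have "unit_ball_maps U = (\<Inter>u\<in>U. {L. norm (L *v u) \<le> 1})"
    unfolding unit_ball_maps_def by auto
  moreover have "continuous_on UNIV (\<lambda>L::real^'n^'n. norm (L *v u))" for u
    unfolding matrix_vector_mult_def by (intro continuous_intros)
  ultimately show ?thesis
    by (auto intro!: closed_INT closed_Collect_le continuous_on_const)
qed

text \<open>A spanning set pins down every matrix column: writing \<open>e\<^sub>j = \<Sum> c\<^sub>t t\<close> with \<open>t \<in> U\<close>
  gives \<open>\<parallel>L e\<^sub>j\<parallel> \<le> \<Sum> |c\<^sub>t|\<close> uniformly on \<open>unit_ball_maps U\<close>.\<close>

lemma unit_ball_maps_column_bound:
  fixes U :: "(real^'n) set"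
  assumes "span U = UNIV"
  shows "\<exists>b. \<forall>L\<in>unit_ball_maps U. norm (L *v axis j 1) \<le> b"
proof -
  have "axis j 1 \<in> span U" using assms by simp
  then obtain T c where T: "finite T" "T \<subseteq> U" "(\<Sum>t\<in>T. c t *\<^sub>R t) = axis j 1"
    by (auto simp: span_explicit)
  have "norm (L *v axis j 1) \<le> (\<Sum>t\<in>T. \<bar>c t\<bar>)" if L: "L \<in> unit_ball_maps U" for L
  proof -
    have lin: "linear ((*v) L)" by simp
    have "L *v axis j 1 = (\<Sum>t\<in>T. c t *\<^sub>R (L *v t))"
      unfolding T(3)[symmetric] by (simp add: linear_sum[OF lin] linear_cmul[OF lin] o_def)
    also have "norm \<dots> \<le> (\<Sum>t\<in>T. norm (c t *\<^sub>R (L *v t)))" by (rule norm_sum)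
    also have "\<dots> \<le> (\<Sum>t\<in>T. \<bar>c t\<bar>)"
    proof (rule sum_mono)
      fix t assume "t \<in> T"
      then have "norm (L *v t) \<le> 1" using L T(2) unfolding unit_ball_maps_def by auto
      then show "norm (c t *\<^sub>R (L *v t)) \<le> \<bar>c t\<bar>" by (simp add: mult_left_le)
    qed
    finally show ?thesis .
  qed
  then show ?thesis by blast
qed

lemma bounded_unit_ball_maps:
  fixes U :: "(real^'n) set"
  assumes "span U = UNIV"
  shows "bounded (unit_ball_maps U)"
proof -
  obtain b where b: "\<And>j L. L \<in> unit_ball_maps U \<Longrightarrow> norm (L *v axis j 1) \<le> b j"
    using unit_ball_maps_column_bound[OF assms] by metis
  have "norm L \<le> (\<Sum>i\<in>(UNIV::'n set). \<Sum>j\<in>UNIV. b j)" if L: "L \<in> unit_ball_maps U" for L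
  proof -
    have entry: "\<bar>L $ i $ j\<bar> \<le> b j" for i j
    proof -
      have "L $ i $ j = (L *v axis j 1) $ i"
        by (simp add: matrix_vector_mult_basis column_def)
      then show ?thesis using component_le_norm_cart[of "L *v axis j 1" i] b[OF L, of j] by simp
    qed
    have "norm L \<le> (\<Sum>i\<in>UNIV. norm (L $ i))" by (simp add: norm_vec_def L2_set_le_sum)
    also have "\<dots> \<le> (\<Sum>i\<in>UNIV. \<Sum>j\<in>UNIV. \<bar>L $ i $ j\<bar>)" by (intro sum_mono norm_le_l1_cart)
    also have "\<dots> \<le> (\<Sum>i\<in>(UNIV::'n set). \<Sum>j\<in>UNIV. b j)" by (intro sum_mono entry)
    finally show ?thesis .
  qed
  then show ?thesis unfolding bounded_iff by blast
qed

text \<open>Existence of a matrix of maximal \<open>|det|\<close> among those mapping \<open>U\<close> into the unit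
  ball; it is invertible because a small multiple of the identity is a competitor.\<close>

lemma max_det_unit_ball_map:
  fixes U :: "(real^'n) set"
  assumes "bounded U" and "span U = UNIV"
  obtains L0 where "L0 \<in> unit_ball_maps U" "det L0 \<noteq> 0"
    "\<And>L. L \<in> unit_ball_maps U \<Longrightarrow> \<bar>det L\<bar> \<le> \<bar>det L0\<bar>"
proof -
  obtain B where B: "B > 0" "\<forall>u\<in>U. norm u \<le> B" using assms(1) bounded_pos by blast
  have cpt: "compact (unit_ball_maps U)"
    using closed_unit_ball_maps bounded_unit_ball_maps[OF assms(2)]
    by (simp add: compact_eq_bounded_closed)
  let ?E = "(1 / B) *\<^sub>R mat 1 :: real^'n^'n"
  have E: "?E \<in> unit_ball_maps U"
    unfolding unit_ball_maps_def using B
    by (auto simp flip: scaleR_matrix_vector_assoc simp: field_simps)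
  have "continuous_on (unit_ball_maps U) (\<lambda>A::real^'n^'n. \<bar>det A\<bar>)"
    unfolding det_def by (intro continuous_intros)
  then obtain L0 where L0: "L0 \<in> unit_ball_maps U"
    "\<And>L. L \<in> unit_ball_maps U \<Longrightarrow> \<bar>det L\<bar> \<le> \<bar>det L0\<bar>"
    using continuous_attains_sup[OF cpt] E by (metis empty_iff)
  have "invertible (mat 1 :: real^'n^'n)" unfolding invertible_def by (intro exI[of _ "mat 1"]) simp
  then have "invertible ?E" using scalar_invertible[of "1 / B"] B by simp
  then have "det ?E \<noteq> 0" by (simp add: invertible_det_nz)
  then have "det L0 \<noteq> 0" using L0(2)[OF E] by linarith
  with L0 show ?thesis using that by blast
qed

section \<open>The maximality argument\<close>

text \<open>Improvement step: if \<open>L0\<close> maps \<open>U\<close> into the unit ball and into the slab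
  \<open>{x. |x \<bullet> w| \<le> t}\<close> with \<open>n t\<^sup>2 < 1\<close>, then rotating \<open>w\<close> to a coordinate axis and applying a
  suitable stretch yields a map of \<open>U\<close> into the unit ball with strictly larger \<open>|det|\<close>.\<close>

lemma det_improvement:
  fixes L0 :: "real^'n^'n" and w :: "real^'n"
  assumes L0: "L0 \<in> unit_ball_maps U" and det0: "det L0 \<noteq> 0" and w: "norm w = 1"
    and slab: "\<And>u. u \<in> U \<Longrightarrow> \<bar>(L0 *v u) \<bullet> w\<bar> \<le> t"
    and thin: "real CARD('n) * t\<^sup>2 < 1"
  obtains L1 where "L1 \<in> unit_ball_maps U" "\<bar>det L0\<bar> < \<bar>det L1\<bar>"
proof -
  obtain d where d: "0 < d" "(1 + d * t\<^sup>2) ^ CARD('n) < 1 + d"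
    using stretch_gain[OF thin] by blast
  fix k :: 'n \<comment> \<open>any coordinate axis serves as the image of \<open>w\<close>\<close>
  obtain Q where Q: "orthogonal_matrix Q" "Q *v axis k 1 = w"
    using orthogonal_matrix_exists_basis[OF w] by metis
  define l where "l = 1 / sqrt (1 + d * t\<^sup>2)"
  have l: "0 < l" unfolding l_def using d(1) by (simp add: add_pos_nonneg)
  define L1 where "L1 = stretch k l (sqrt (1 + d)) ** transpose Q ** L0"
  have "L1 \<in> unit_ball_maps U"
    unfolding unit_ball_maps_def
  proof (intro CollectI ballI)
    fix u assume u: "u \<in> U"
    define y where "y = transpose Q *v (L0 *v u)"
    have "norm y = norm (L0 *v u)"
      unfolding y_def using Q(1) orthogonal_matrix_transpose norm_orthogonal_matrix by blast
    then have "norm y \<le> 1" using L0 u unfolding unit_ball_maps_def by auto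
    moreover have "\<bar>y $ k\<bar> \<le> t"
      using slab[OF u] unfolding y_def cart_eq_inner_axis transpose_matrix_vector dot_lmul_matrix Q(2) .
    ultimately have "norm (stretch k l (sqrt (1 + d)) *v y) \<le> 1"
      unfolding l_def using d(1) by (intro norm_stretch_le_1) auto
    then show "norm (L1 *v u) \<le> 1"
      unfolding L1_def y_def by (simp add: matrix_vector_mul_assoc matrix_mul_assoc)
  qed
  moreover have "\<bar>det L0\<bar> < \<bar>det L1\<bar>"
  proof -
    have "sqrt (1 + d * t\<^sup>2) ^ CARD('n) < sqrt (1 + d)"
      unfolding real_sqrt_power[symmetric] using d(2) by simp
    then have gain: "1 < l ^ CARD('n) * sqrt (1 + d)"
      unfolding l_def using d(1) by (simp add: power_divide field_simps add_pos_nonneg)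
    have "\<bar>det (transpose Q)\<bar> = 1" using det_orthogonal_matrix[OF Q(1)] by auto
    then have "\<bar>det L1\<bar> = l ^ CARD('n) * sqrt (1 + d) * \<bar>det L0\<bar>"
      unfolding L1_def det_mul det_stretch abs_mult using l d(1) by simp
    then show ?thesis using gain det0 by simp
  qed
  ultimately show ?thesis using that by blast
qed

text \<open>Otherwise \<open>L0 U\<close> lies in
  the slab of half-width \<open>\<delta> / \<parallel>z\<parallel>\<close> around \<open>z\<^sup>\<bottom>\<close>, and the improvement step applies.\<close>

lemma max_det_dual_bound:
  fixes L0 :: "real^'n^'n" and z :: "real^'n"
  assumes L0: "L0 \<in> unit_ball_maps U" "det L0 \<noteq> 0"
    and maximal: "\<And>L. L \<in> unit_ball_maps U \<Longrightarrow> \<bar>det L\<bar> \<le> \<bar>det L0\<bar>"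
    and dual: "\<And>u. u \<in> U \<Longrightarrow> \<bar>(L0 *v u) \<bullet> z\<bar> \<le> \<delta>" and "0 \<le> \<delta>"
  shows "norm z \<le> sqrt (real CARD('n)) * \<delta>"
proof (rule ccontr)
  let ?n = "real CARD('n)"
  define r where "r = norm z"
  assume "\<not> norm z \<le> sqrt ?n * \<delta>"
  then have big: "sqrt ?n * \<delta> < r" unfolding r_def by simp
  then have r: "0 < r" using \<open>0 \<le> \<delta>\<close> by (meson le_less_trans mult_nonneg_nonneg real_sqrt_ge_zero of_nat_0_le_iff)
  have "norm ((1 / r) *\<^sub>R z) = 1" using r unfolding r_def by simp
  moreover have "\<bar>(L0 *v u) \<bullet> ((1 / r) *\<^sub>R z)\<bar> \<le> \<delta> / r" if "u \<in> U" for u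
    using dual[OF that] r by (simp add: divide_right_mono)
  moreover have "?n * (\<delta> / r)\<^sup>2 < 1"
  proof -
    have "(sqrt ?n * \<delta>)\<^sup>2 < r\<^sup>2" using big \<open>0 \<le> \<delta>\<close> by (intro power_strict_mono) auto
    then show ?thesis using r by (simp add: power_mult_distrib power_divide field_simps)
  qed
  ultimately obtain L1 where "L1 \<in> unit_ball_maps U" "\<bar>det L0\<bar> < \<bar>det L1\<bar>"
    using det_improvement[OF L0, of "(1 / r) *\<^sub>R z" "\<delta> / r"] by blast
  then show False using maximal by fastforce
qed

lemma abs_inner_le_SUP:
  fixes U V :: "'a::real_inner set"
  assumes "bounded U" "bounded V" "u \<in> U" "v \<in> V"
  shows "\<bar>u \<bullet> v\<bar> \<le> (SUP p\<in>U \<times> V. \<bar>fst p \<bullet> snd p\<bar>)"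
proof -
  obtain BU where BU: "\<forall>x\<in>U. norm x \<le> BU" using assms(1) bounded_iff by blast
  obtain BV where BV: "\<forall>y\<in>V. norm y \<le> BV" using assms(2) bounded_iff by blast
  have bdd: "bdd_above ((\<lambda>p. \<bar>fst p \<bullet> snd p\<bar>) ` (U \<times> V))"
  proof (rule bdd_aboveI2)
    fix p assume "p \<in> U \<times> V"
    then have "norm (fst p) \<le> BU" "norm (snd p) \<le> BV" using BU BV by auto
    then show "\<bar>fst p \<bullet> snd p\<bar> \<le> BU * BV"
      by (meson Cauchy_Schwarz_ineq2 mult_mono norm_ge_zero order_trans)
  qed
  have "(u, v) \<in> U \<times> V" using assms(3,4) by simp
  from cSUP_upper[OF this bdd] show ?thesis by simp
qed

text \<open>\<open>\<Delta>\<close> is positive for spanning sets: a nonzero \<open>v \<in> V\<close> cannot be orthogonal to all of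
  the spanning set \<open>U\<close>.\<close>

lemma SUP_abs_inner_pos:
  fixes U V :: "(real^'n) set"
  assumes "bounded U" "bounded V" "span U = UNIV" "span V = UNIV"
  shows "0 < (SUP p\<in>U \<times> V. \<bar>fst p \<bullet> snd p\<bar>)"
proof -
  obtain v where v: "v \<in> V" "v \<noteq> 0"
  proof (rule ccontr)
    assume "\<not> thesis"
    then have "V \<subseteq> {0}" using that by blast
    then have "span V \<subseteq> {0}" by (metis span_mono span_empty span_insert_0)
    then show False using assms(4) by (metis UNIV_not_singleton subset_singleton_iff UNIV_I empty_iff)
  qed
  obtain u where u: "u \<in> U" "u \<bullet> v \<noteq> 0"
  proof (rule ccontr)
    assume "\<not> thesis"
    then have "orthogonal v v"
      using that by (intro orthogonal_to_span[of v U]) (auto simp: assms(3) orthogonal_def inner_commute)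
    then show False using v(2) by (simp add: orthogonal_def)
  qed
  show ?thesis using abs_inner_le_SUP[OF assms(1,2) u(1) v(1)] u(2) by linarith
qed

lemma root_4_squared:
  fixes x :: real
  assumes "0 \<le> x"
  shows "(root 4 x)\<^sup>2 = sqrt x"
proof -
  have "root 4 x = sqrt (sqrt x)" using real_root_mult_exp[of 2 2 x] by (simp add: sqrt_def)
  then show ?thesis using assms by simp
qed

lemma rescale_balanced:
  fixes L :: "real^'n^'n"
  assumes L: "invertible L" and c: "0 < c"
    and LU: "\<forall>u\<in>U. norm (L *v u) \<le> 1"
    and LV: "\<forall>v\<in>V. norm (transpose (matrix_inv L) *v v) \<le> c\<^sup>2"
  shows "invertible (c *\<^sub>R L) \<and> (\<forall>u\<in>U. norm ((c *\<^sub>R L) *v u) \<le> c) \<and>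
         (\<forall>v\<in>V. norm (transpose (matrix_inv (c *\<^sub>R L)) *v v) \<le> c)"
proof (intro conjI ballI)
  show "invertible (c *\<^sub>R L)" using scalar_invertible[OF _ L] c by simp
  show "norm ((c *\<^sub>R L) *v u) \<le> c" if "u \<in> U" for u
    using LU that c by (simp flip: scaleR_matrix_vector_assoc add: mult_left_le)
  show "norm (transpose (matrix_inv (c *\<^sub>R L)) *v v) \<le> c" if "v \<in> V" for v
  proof -
    have "norm (transpose (matrix_inv (c *\<^sub>R L)) *v v) = norm (transpose (matrix_inv L) *v v) / c"
      using c by (simp add: matrix_inv_scaleR[OF L] transpose_scalar flip: scaleR_matrix_vector_assoc)
    also have "\<dots> \<le> c\<^sup>2 / c" using LV that c by (simp add: divide_right_mono)
    also have "\<dots> = c" by (simp add: power2_eq_square)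
    finally show ?thesis .
  qed
qed

theorem corollary6p5:
  fixes U V :: "(real ^ 'n) set"
  assumes "bounded U" and "bounded V"
    and "span U = UNIV" and "span V = UNIV"
  defines "\<Delta> \<equiv> (SUP p\<in>U \<times> V. \<bar>fst p \<bullet> snd p\<bar>)"
  shows "\<exists>L :: real ^ 'n ^ 'n. invertible L \<and>
           (\<forall>u\<in>U. norm (L *v u) \<le> root 4 (real CARD('n)) * sqrt \<Delta>) \<and>
           (\<forall>v\<in>V. norm (transpose (matrix_inv L) *v v) \<le> root 4 (real CARD('n)) * sqrt \<Delta>)"
proof -
  let ?n = "real CARD('n)"
  obtain L0 where L0: "L0 \<in> unit_ball_maps U" "det L0 \<noteq> 0"
    and maximal: "\<And>L. L \<in> unit_ball_maps U \<Longrightarrow> \<bar>det L\<bar> \<le> \<bar>det L0\<bar>"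
    using max_det_unit_ball_map[OF assms(1,3)] by blast
  have inv: "invertible L0" using L0(2) by (simp add: invertible_det_nz)
  have \<Delta>: "0 < \<Delta>" unfolding \<Delta>_def using SUP_abs_inner_pos[OF assms(1-4)] .
  have dual: "norm (transpose (matrix_inv L0) *v v) \<le> sqrt ?n * \<Delta>" if v: "v \<in> V" for v
  proof (rule max_det_dual_bound[OF L0 maximal _ less_imp_le[OF \<Delta>]])
    fix u assume u: "u \<in> U"
    show "\<bar>(L0 *v u) \<bullet> (transpose (matrix_inv L0) *v v)\<bar> \<le> \<Delta>"
      using abs_inner_le_SUP[OF assms(1,2) u v]
        inner_left_inverse_transpose[OF matrix_inv_mult(2)[OF inv]]
      unfolding \<Delta>_def by simp
  qed
  define c where "c = root 4 ?n * sqrt \<Delta>"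
  have c: "0 < c" unfolding c_def using \<Delta> by simp
  have "c\<^sup>2 = sqrt ?n * \<Delta>"
    unfolding c_def power_mult_distrib using \<Delta> by (simp add: root_4_squared)
  then have "\<forall>v\<in>V. norm (transpose (matrix_inv L0) *v v) \<le> c\<^sup>2" using dual by simp
  moreover have "\<forall>u\<in>U. norm (L0 *v u) \<le> 1" using L0(1) unfolding unit_ball_maps_def by simp
  ultimately show ?thesis
    using rescale_balanced[OF inv c] unfolding c_def by blast
qed

end
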